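(* Let $\alpha(n)$ be a log-polynomial sequence of degree $m\ge2$ with data $\{A(n),\kappa,\delta(n)\}$. Suppose the real sequences $A^*(n)$ and $\delta^*(n)>0$ satisfy $$A^*(n)=A(n)+o(\delta(n)),\qquad \delta^*(n)=\delta(n)(1+o(1))\qquad(n\to\infty).$$ Then $\alpha$ is Hermite-Jensen of degree $d$ with data $\{A^*(n),\kappa,\delta^*(n)\}$ for every $d$ with $1\le d\le m+1$.
   Context: Jensen polynomials: $J_\alpha^{d,n}(X)=\sum_{j=0}^d\binom{d}{j}\alpha(n+j)X^j$ and $K_\alpha^{d,n}(X)=X^dJ_\alpha^{d,n}(1/X)$. Limits of polynomials are coefficientwise. $H_d$ is the physicists' Hermite polynomial, $e^{2Xt-t^2}=\sum_d H_d(X)t^d/d!$. Log-polynomial: let $m\ge2$ be an integer and $\kappa\in\{1,-1\}$. A sequence of positive reals $\alpha(n)$ is log-polynomial of degree $m$ with data $\{A(n),\kappa,\delta(n)\}$ if there are real sequences $A(n),\delta(n),g_k(n)$ ($3\le k\le m$) such that $$\log\left(\frac{\alpha(n+j)}{\alpha(n)}\right)=A(n)j+\kappa\delta(n)^2j^2+\sum_{k=3}^m g_k(n)j^k+o(\delta(n)^{m+1})\quad(n\to\infty)$$ for $j=1,\dots,m+1$. In addition, $\delta(n)>0$, $\delta(n)\to0$ and $g_k(n)=o(\delta(n)^k)$. Hermite-Jensen: a sequence of positive reals $\alpha(n)$ is Hermite-Jensen of degree $d\ge1$ with data $\{A(n),\kappa,\delta(n)\}$ if, as $n\to\infty$, both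 $$\frac{\delta(n)^{-d}}{\alpha(n)}J_\alpha^{d,n}\!\left(\frac{\delta(n)X-1}{e^{A(n)}}\right)\quad\text{and}\quad\frac{(e^{A(n)}\delta(n))^{-d}}{\alpha(n)}K_\alpha^{d,n}\!\left(e^{A(n)}(\delta(n)X-1)\right)$$ converge coefficientwise to $H_d(X/2)$ if $\kappa=-1$, and to $i^{-d}H_d(iX/2)$ if $\kappa=1$. *)

theory Defs
  imports Complex_Main "HOL-Computational_Algebra.Polynomial" "HOL-Library.Landau_Symbols"
begin

definition jensen_J :: "(nat \<Rightarrow> real) \<Rightarrow> nat \<Rightarrow> nat \<Rightarrow> real poly" where
  "jensen_J \<alpha> d n = (\<Sum>j\<le>d. monom (real (d choose j) * \<alpha> (n + j)) j)"

(* K_alpha^{d,n}(X) = X^d J_alpha^{d,n}(1/X) = sum_{j=0}^d binom(d,j) alpha(n+j) X^(d-j) *)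
definition jensen_K :: "(nat \<Rightarrow> real) \<Rightarrow> nat \<Rightarrow> nat \<Rightarrow> real poly" where
  "jensen_K \<alpha> d n = (\<Sum>j\<le>d. monom (real (d choose j) * \<alpha> (n + j)) (d - j))"

(* Physicists' Hermite polynomial, the coefficient extraction of
   exp(2Xt - t^2) = sum_d H_d(X) t^d / d!:
   H_d(X) = d! * sum_{k <= d/2} (-1)^k (2X)^(d-2k) / (k! (d-2k)!) *)
definition hermite :: "nat \<Rightarrow> complex poly" where
  "hermite d = (\<Sum>k\<le>d div 2.
      monom (of_real (fact d * (-1) ^ k * 2 ^ (d - 2 * k) / (fact k * fact (d - 2 * k)))) (d - 2 * k))"

definition poly_conv :: "(nat \<Rightarrow> complex poly) \<Rightarrow> complex poly \<Rightarrow> bool" where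
  "poly_conv P Q \<longleftrightarrow> (\<forall>i. (\<lambda>n. coeff (P n) i) \<longlonglongrightarrow> coeff Q i)"

definition log_polynomial ::
  "(nat \<Rightarrow> real) \<Rightarrow> nat \<Rightarrow> (nat \<Rightarrow> real) \<Rightarrow> real \<Rightarrow> (nat \<Rightarrow> real) \<Rightarrow> bool" where
  "log_polynomial \<alpha> m A \<kappa> \<delta> \<longleftrightarrow>
     m \<ge> 2 \<and> \<kappa> \<in> {1, -1} \<and> (\<forall>n. \<alpha> n > 0) \<and>
     (\<exists>g :: nat \<Rightarrow> nat \<Rightarrow> real.
        (\<forall>j\<in>{1..m+1}.
           (\<lambda>n. ln (\<alpha> (n + j) / \<alpha> n) - (A n * real j + \<kappa> * \<delta> n ^ 2 * real j ^ 2
                 + (\<Sum>k=3..m. g k n * real j ^ k)))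
           \<in> o[sequentially](\<lambda>n. \<delta> n ^ (m + 1))) \<and>
        (\<forall>n. \<delta> n > 0) \<and> \<delta> \<longlonglongrightarrow> 0 \<and>
        (\<forall>k\<in>{3..m}. g k \<in> o[sequentially](\<lambda>n. \<delta> n ^ k)))"

definition hermite_target :: "real \<Rightarrow> nat \<Rightarrow> complex poly" where
  "hermite_target \<kappa> d =
     (if \<kappa> = -1 then pcompose (hermite d) [:0, 1/2:]
      else smult (inverse (\<i> ^ d)) (pcompose (hermite d) [:0, \<i>/2:]))"

definition hermite_jensen ::
  "(nat \<Rightarrow> real) \<Rightarrow> nat \<Rightarrow> (nat \<Rightarrow> real) \<Rightarrow> real \<Rightarrow> (nat \<Rightarrow> real) \<Rightarrow> bool" where
  "hermite_jensen \<alpha> d A \<kappa> \<delta> \<longleftrightarrow>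
     d \<ge> 1 \<and> \<kappa> \<in> {1, -1} \<and> (\<forall>n. \<alpha> n > 0) \<and>
     poly_conv (\<lambda>n. map_poly complex_of_real
        (smult (inverse (\<delta> n ^ d) / \<alpha> n)
          (pcompose (jensen_J \<alpha> d n) [: -1 / exp (A n), \<delta> n / exp (A n) :])))
       (hermite_target \<kappa> d) \<and>
     poly_conv (\<lambda>n. map_poly complex_of_real
        (smult (inverse ((exp (A n) * \<delta> n) ^ d) / \<alpha> n)
          (pcompose (jensen_K \<alpha> d n) [: - exp (A n), exp (A n) * \<delta> n :])))
       (hermite_target \<kappa> d)"

end

theory Submission
  imports Defs
begin

(* Put rho_n(j) = alpha(n+j) / (alpha(n) exp(j A'(n))). The log-polynomial expansion, with A
   replaced by A' (which changes only the linear term, by o(delta)), says that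
   log rho_n(j) = Q_n(delta(n) j) + o(delta(n)^(m+1)) for polynomials Q_n of bounded degree with
   Q_n -> kappa X^2 coefficientwise and Q_n(delta(n) j) = O(delta(n)). Expanding exp to order d,
   rho_n(j) agrees up to o(delta(n)^d) with T_n(delta(n) j), where T_n is the order-d truncation
   of exp(Q_n). The i-th coefficient of either rescaled Jensen polynomial is
   delta'(n)^(i-d) sum_j W_j rho_n(j) with binomial weights W_j whose moments sum_j W_j j^u are
   finite differences of j^u and so vanish for u < d - i. Hence only the coefficient of X^(d-i)
   in T_n survives; it tends to the coefficient of X^(d-i) in exp(kappa X^2), which is exactly
   the corresponding coefficient of the rescaled Hermite polynomial, and delta/delta' -> 1. *)

lemma alternating_binomial_sum_Suc:
  fixes f :: "nat \<Rightarrow> real"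
  shows "(\<Sum>l\<le>Suc k. real (Suc k choose l) * (-1)^l * f l)
       = (\<Sum>l\<le>k. real (k choose l) * (-1)^l * (f l - f (Suc l)))"
proof -
  have "(\<Sum>l\<le>Suc k. real (Suc k choose l) * (-1)^l * f l)
      = f 0 + (\<Sum>l\<le>k. real (Suc k choose Suc l) * (-1)^(Suc l) * f (Suc l))"
    by (subst sum.atMost_Suc_shift) simp
  also have "\<dots> = f 0 + (\<Sum>l\<le>k. real (k choose Suc l) * (-1)^(Suc l) * f (Suc l))
      - (\<Sum>l\<le>k. real (k choose l) * (-1)^l * f (Suc l))"
    by (simp add: sum.distrib[symmetric] sum_subtractf[symmetric] algebra_simps)
  also have "f 0 + (\<Sum>l\<le>k. real (k choose Suc l) * (-1)^(Suc l) * f (Suc l))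
      = (\<Sum>l\<le>Suc k. real (k choose l) * (-1)^l * f l)"
    by (subst sum.atMost_Suc_shift) simp
  also have "\<dots> = (\<Sum>l\<le>k. real (k choose l) * (-1)^l * f l)"
    by simp
  finally show ?thesis by (simp add: sum_subtractf algebra_simps)
qed

lemma alternating_binomial_power_sum:
  fixes c :: real
  shows "u \<le> k \<Longrightarrow> (\<Sum>l\<le>k. real (k choose l) * (-1)^l * (c + real l)^u)
      = (if u = k then (-1)^k * fact k else 0)"
proof (induction k arbitrary: u)
  case 0
  then show ?case by simp
next
  case (Suc k)
  have difference: "(c + real l)^u - (c + real (Suc l))^u
      = - (\<Sum>v<u. real (u choose v) * (c + real l)^v)" for l
  proof -
    have "(c + real (Suc l))^u = ((c + real l) + 1)^u" by (simp add: add_ac)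
    also have "\<dots> = (\<Sum>v\<le>u. real (u choose v) * (c + real l)^v)"
      by (subst binomial_ring) (simp add: mult_ac)
    also have "\<dots> = (\<Sum>v<u. real (u choose v) * (c + real l)^v) + (c + real l)^u"
      by (simp add: lessThan_Suc_atMost[symmetric])
    finally show ?thesis by simp
  qed
  have "(\<Sum>l\<le>Suc k. real (Suc k choose l) * (-1)^l * (c + real l)^u)
      = (\<Sum>l\<le>k. real (k choose l) * (-1)^l * (- (\<Sum>v<u. real (u choose v) * (c + real l)^v)))"
    unfolding alternating_binomial_sum_Suc difference by (rule refl)
  also have "\<dots> = - (\<Sum>v<u. real (u choose v)
      * (\<Sum>l\<le>k. real (k choose l) * (-1)^l * (c + real l)^v))"
    by (simp add: sum_distrib_left sum_negf[symmetric] algebra_simps sum.swap[of _ "{..k}"])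
  also have "\<dots> = - (\<Sum>v<u. real (u choose v) * (if v = k then (-1)^k * fact k else 0))"
    using Suc.prems by (intro arg_cong[where f=uminus] sum.cong refl) (simp add: Suc.IH)
  also have "\<dots> = (if u = Suc k then (-1)^(Suc k) * fact (Suc k) else 0)"
  proof (cases "u = Suc k")
    case True
    have "(\<Sum>v<u. real (u choose v) * (if v = k then (-1)^k * fact k else 0))
        = (\<Sum>v<u. if v = k then real (u choose k) * ((-1)^k * fact k) else 0)"
      by (intro sum.cong) auto
    also have "\<dots> = real (u choose k) * ((-1)^k * fact k)" using True by simp
    finally show ?thesis using True by (simp add: fact_Suc)
  next
    case False
    then have "u < Suc k" using Suc.prems by simp
    then show ?thesis using False by (auto intro!: sum.neutral)
  qed
  finally show ?case .
qed

text \<open>The weights of the next two lemmas are those with which \<open>\<alpha>(n+j)\<close> enters the coefficient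
  of \<open>X\<^sup>i\<close> of the rescaled polynomials \<open>J\<close> and \<open>K\<close>, see \<open>coeff_jensen_J_rescaled\<close>.\<close>

lemma jensen_J_weight_moments:
  assumes "i \<le> d" "u \<le> d - i"
  shows "(\<Sum>j\<le>d. real (d choose j) * real (j choose i) * (-1)^(j-i) * real j ^ u)
       = (if u = d - i then (-1)^(d-i) * fact d / fact i else 0)"
proof -
  let ?f = "\<lambda>j. real (d choose j) * real (j choose i) * (-1::real)^(j-i) * real j ^ u"
  have "sum ?f {..d} = sum ?f {i..d}"
    by (rule sum.mono_neutral_right) auto
  also have "\<dots> = sum ?f {0+i..(d-i)+i}" using assms by simp
  also have "\<dots> = (\<Sum>l=0..d-i. ?f (l+i))" by (rule sum.shift_bounds_cl_nat_ivl)
  also have "\<dots> = (\<Sum>l\<le>d-i. real (d choose i)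
      * (real ((d-i) choose l) * (-1)^l * (real i + real l)^u))"
  proof (rule sum.cong)
    fix l assume l: "l \<in> {..d-i}"
    have "(d choose (l+i)) * ((l+i) choose i) = (d choose i) * ((d-i) choose (l+i-i))"
      using l assms by (intro choose_mult) auto
    then have "real (d choose (l+i)) * real ((l+i) choose i)
        = real (d choose i) * real ((d-i) choose l)"
      by (metis add_diff_cancel_right' of_nat_mult)
    then show "?f (l+i)
        = real (d choose i) * (real ((d-i) choose l) * (-1)^l * (real i + real l)^u)"
      by (simp add: algebra_simps)
  qed (auto simp: atLeast0AtMost)
  also have "\<dots> = real (d choose i) * (if u = d - i then (-1)^(d-i) * fact (d-i) else 0)"
    by (simp add: sum_distrib_left[symmetric] alternating_binomial_power_sum assms)
  also have "\<dots> = (if u = d - i then (-1)^(d-i) * fact d / fact i else 0)"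
    using assms by (simp add: binomial_fact field_simps)
  finally show ?thesis .
qed

lemma jensen_K_weight_moments:
  assumes "i \<le> d" "u \<le> d - i"
  shows "(\<Sum>j\<le>d. real (d choose j) * real ((d-j) choose i) * (-1)^(d-j-i) * real j ^ u)
       = (if u = d - i then fact d / fact i else 0)"
proof -
  let ?f = "\<lambda>j. real (d choose j) * real ((d-j) choose i) * (-1::real)^(d-j-i) * real j ^ u"
  let ?W = "\<lambda>j. real (d choose j) * real (j choose i) * (-1::real)^(j-i)"
  have "sum ?f {..d} = sum ?f {0..d}" by (simp add: atLeast0AtMost)
  also have "\<dots> = (\<Sum>j=0..d. ?f (d + 0 - j))" by (rule sum.atLeastAtMost_rev)
  also have "\<dots> = (\<Sum>j\<le>d. ?W j * (real d - real j) ^ u)"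
  proof (intro sum.cong)
    fix j assume "j \<in> {..d}"
    then have j: "j \<le> d" by simp
    have "d choose (d - j) = d choose j" using binomial_symmetric[OF j] by simp
    then show "?f (d + 0 - j) = ?W j * (real d - real j) ^ u"
      using j by (simp add: of_nat_diff)
  qed (simp add: atLeast0AtMost)
  also have "\<dots> = (\<Sum>j\<le>d. \<Sum>v\<le>u. ?W j * (real (u choose v) * (-1)^v * real d ^ (u - v) * real j ^ v))"
  proof (intro sum.cong refl)
    fix j
    have "(real d - real j) ^ u = ((- real j) + real d) ^ u" by simp
    also have "\<dots> = (\<Sum>v\<le>u. real (u choose v) * (-1)^v * real d ^ (u - v) * real j ^ v)"
      by (subst binomial_ring, intro sum.cong refl, simp only: power_minus[of "real j"] mult_ac)
    finally show "?W j * (real d - real j) ^ u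
        = (\<Sum>v\<le>u. ?W j * (real (u choose v) * (-1)^v * real d ^ (u - v) * real j ^ v))"
      by (simp add: sum_distrib_left)
  qed
  also have "\<dots> = (\<Sum>v\<le>u. real (u choose v) * (-1)^v * real d ^ (u - v)
      * (\<Sum>j\<le>d. ?W j * real j ^ v))"
    by (subst sum.swap) (simp add: sum_distrib_left mult_ac)
  also have "\<dots> = (\<Sum>v\<le>u. real (u choose v) * (-1)^v * real d ^ (u - v)
      * (if v = d - i then (-1)^(d-i) * fact d / fact i else 0))"
    using assms by (intro sum.cong refl) (simp add: jensen_J_weight_moments)
  also have "\<dots> = (if u = d - i then fact d / fact i else 0)"
  proof (cases "u = d - i")
    case True
    have "(\<Sum>v\<le>u. real (u choose v) * (-1)^v * real d ^ (u - v)
        * (if v = d - i then (-1)^(d-i) * fact d / fact i else 0))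
       = (\<Sum>v\<le>u. if v = u then (-1)^u * ((-1)^u * fact d / fact i) else 0)"
      using True by (intro sum.cong) auto
    also have "\<dots> = fact d / fact i"
      by (simp add: power_mult_distrib[symmetric] mult.assoc[symmetric])
    finally show ?thesis using True by simp
  next
    case False
    then show ?thesis using assms by (subst if_not_P[OF False], intro sum.neutral) auto
  qed
  finally show ?thesis .
qed

lemma exp_taylor_remainder_bound:
  fixes y :: real
  assumes "\<bar>y\<bar> \<le> 1"
  shows "\<bar>exp y - (\<Sum>k\<le>N. y^k / fact k)\<bar> \<le> 3 * \<bar>y\<bar> ^ Suc N"
proof -
  obtain t where t: "\<bar>t\<bar> \<le> \<bar>y\<bar>"
    "exp y = (\<Sum>k<Suc N. y^k / fact k) + exp t / fact (Suc N) * y ^ Suc N"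
    using Maclaurin_exp_le[of y "Suc N"] by blast
  have "exp t \<le> exp 1" using t assms by simp
  also have "\<dots> \<le> 3" using exp_le by simp
  finally have exp_t: "exp t \<le> 3" .
  have fact_ge: "1 \<le> (fact (Suc N) :: real)" by (rule fact_ge_1)
  have "\<bar>exp t / fact (Suc N) * y ^ Suc N\<bar> = exp t / fact (Suc N) * \<bar>y\<bar> ^ Suc N"
    by (simp add: abs_mult power_abs)
  also have "\<dots> \<le> exp t * \<bar>y\<bar> ^ Suc N"
    using fact_ge by (intro mult_right_mono) (auto simp: divide_le_eq)
  also have "\<dots> \<le> 3 * \<bar>y\<bar> ^ Suc N"
    using exp_t by (intro mult_right_mono) auto
  finally show ?thesis using t by (simp add: lessThan_Suc_atMost)
qed

lemma tendsto_zero_power_bigo: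
  fixes \<delta> :: "'a \<Rightarrow> real"
  assumes "(\<delta> \<longlongrightarrow> 0) F" and "k \<le> d"
  shows "(\<lambda>x. \<delta> x ^ d) \<in> O[F](\<lambda>x. \<delta> x ^ k)"
proof -
  have "(\<lambda>x. \<delta> x ^ (d - k)) \<in> O[F](\<lambda>_. 1)"
    by (rule bigoI_tendsto[where c = "0 ^ (d - k)"]) (use assms(1) in \<open>auto intro!: tendsto_eq_intros\<close>)
  then have "(\<lambda>x. \<delta> x ^ k * \<delta> x ^ (d - k)) \<in> O[F](\<lambda>x. \<delta> x ^ k * 1)"
    by (intro landau_o.big_mult landau_o.big_refl)
  then show ?thesis using assms(2) by (simp flip: power_add)
qed

lemma ln_div_exp:
  fixes x y :: real
  assumes "x \<noteq> 0"
  shows "ln (x / exp y) = ln x - y"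
  using assms by (simp add: ln_div)

lemma eventually_abs_le_1_of_tendsto_0:
  fixes x :: "'a \<Rightarrow> real"
  assumes "(x \<longlongrightarrow> 0) F"
  shows "eventually (\<lambda>n. \<bar>x n\<bar> \<le> 1) F"
  using order_tendstoD(2)[OF tendsto_rabs_zero[OF assms], of 1] by (auto elim: eventually_mono)

lemma exp_add_minus_exp_bigo:
  fixes x \<epsilon> :: "'a \<Rightarrow> real"
  assumes "(x \<longlongrightarrow> 0) F" and "(\<epsilon> \<longlongrightarrow> 0) F"
  shows "(\<lambda>n. exp (x n + \<epsilon> n) - exp (x n)) \<in> O[F](\<epsilon>)"
proof (rule bigoI[where c = 9])
  show "\<forall>\<^sub>F n in F. norm (exp (x n + \<epsilon> n) - exp (x n)) \<le> 9 * norm (\<epsilon> n)"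
    using eventually_abs_le_1_of_tendsto_0[OF assms(1)] eventually_abs_le_1_of_tendsto_0[OF assms(2)]
  proof eventually_elim
    case (elim n)
    have "exp (x n) \<le> exp 1" using elim by simp
    also have "\<dots> \<le> 3" using exp_le by simp
    finally have exp_x: "exp (x n) \<le> 3" .
    have "exp (x n + \<epsilon> n) - exp (x n) = exp (x n) * (exp (\<epsilon> n) - 1)"
      by (simp add: exp_add algebra_simps)
    then have "\<bar>exp (x n + \<epsilon> n) - exp (x n)\<bar> = exp (x n) * \<bar>exp (\<epsilon> n) - 1\<bar>"
      by (simp add: abs_mult)
    also have "\<dots> \<le> 3 * (3 * \<bar>\<epsilon> n\<bar>)"
      using exp_x exp_taylor_remainder_bound[OF elim(2), of 0] by (intro mult_mono) auto
    finally show ?case by simp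
  qed
qed

lemma exp_minus_taylor_bigo:
  fixes x :: "'a \<Rightarrow> real"
  assumes "(x \<longlongrightarrow> 0) F"
  shows "(\<lambda>n. exp (x n) - (\<Sum>s\<le>d. x n ^ s / fact s)) \<in> O[F](\<lambda>n. x n ^ Suc d)"
proof (rule bigoI[where c = 3])
  show "\<forall>\<^sub>F n in F. norm (exp (x n) - (\<Sum>s\<le>d. x n ^ s / fact s)) \<le> 3 * norm (x n ^ Suc d)"
    using eventually_abs_le_1_of_tendsto_0[OF assms]
  proof eventually_elim
    case (elim n)
    show ?case
      using exp_taylor_remainder_bound[OF elim, of d] by (simp add: power_abs abs_mult)
  qed
qed

lemma exp_taylor_smallo:
  fixes x \<epsilon> \<delta> :: "nat \<Rightarrow> real"
  assumes "\<delta> \<longlonglongrightarrow> 0" and "x \<in> O(\<delta>)" and "\<epsilon> \<in> o(\<lambda>n. \<delta> n ^ d)"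
  shows "(\<lambda>n. exp (x n + \<epsilon> n) - (\<Sum>s\<le>d. x n ^ s / fact s)) \<in> o(\<lambda>n. \<delta> n ^ d)"
proof -
  have \<delta>_small: "\<delta> \<in> o(\<lambda>_. 1)"
    by (rule smalloI_tendsto) (use assms(1) in auto)
  have "x \<in> o(\<lambda>_. 1)" using assms(2) \<delta>_small by (rule landau_o.big_small_trans)
  from smalloD_tendsto[OF this] have x_lim: "x \<longlonglongrightarrow> 0" by simp
  have "\<epsilon> \<in> o(\<lambda>_. 1)"
    using assms(3) tendsto_zero_power_bigo[OF assms(1), of 0 d] by (auto intro: landau_o.small_big_trans)
  from smalloD_tendsto[OF this] have \<epsilon>_lim: "\<epsilon> \<longlonglongrightarrow> 0" by simp
  have perturbation: "(\<lambda>n. exp (x n + \<epsilon> n) - exp (x n)) \<in> o(\<lambda>n. \<delta> n ^ d)"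
    using exp_add_minus_exp_bigo[OF x_lim \<epsilon>_lim] assms(3) by (rule landau_o.big_small_trans)
  note exp_minus_taylor_bigo[OF x_lim, of d]
  also have "(\<lambda>n. x n ^ Suc d) \<in> O(\<lambda>n. \<delta> n ^ Suc d)"
    using assms(2) by (rule landau_o.big_power)
  also have "(\<lambda>n. \<delta> n ^ Suc d) \<in> o(\<lambda>n. 1 * \<delta> n ^ d)"
    unfolding power_Suc using \<delta>_small by (intro landau_o.small_big_mult landau_o.big_refl)
  finally have truncation: "(\<lambda>n. exp (x n) - (\<Sum>s\<le>d. x n ^ s / fact s)) \<in> o(\<lambda>n. \<delta> n ^ d)"
    by simp
  show ?thesis
    using sum_in_smallo(1)[OF perturbation truncation] by simp
qed

definition exp_trunc :: "nat \<Rightarrow> real poly \<Rightarrow> real poly" where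
  "exp_trunc d q = (\<Sum>s\<le>d. smult (1 / fact s) (q ^ s))"

lemma poly_exp_trunc: "poly (exp_trunc d q) x = (\<Sum>s\<le>d. poly q x ^ s / fact s)"
  by (simp add: exp_trunc_def poly_sum)

lemma degree_exp_trunc_le:
  assumes "degree q \<le> D"
  shows "degree (exp_trunc d q) \<le> D * d"
  unfolding exp_trunc_def
proof (rule degree_sum_le)
  fix s assume "s \<in> {..d}"
  have "degree (smult (1 / fact s) (q ^ s)) \<le> degree q * s"
    using degree_smult_le degree_power_le order.trans by blast
  also have "\<dots> \<le> D * d" using assms \<open>s \<in> {..d}\<close> by (intro mult_mono) auto
  finally show "degree (smult (1 / fact s) (q ^ s)) \<le> D * d" .
qed simp

lemma coeff_power_tendsto:
  fixes P :: "nat \<Rightarrow> real poly"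
  assumes "\<And>t. (\<lambda>n. coeff (P n) t) \<longlonglongrightarrow> coeff P0 t"
  shows "(\<lambda>n. coeff (P n ^ s) t) \<longlonglongrightarrow> coeff (P0 ^ s) t"
proof (induction s arbitrary: t)
  case 0
  then show ?case by simp
next
  case (Suc s)
  show ?case unfolding power_Suc coeff_mult
    by (intro tendsto_sum tendsto_mult assms Suc.IH)
qed

lemma coeff_exp_trunc_tendsto:
  fixes Q :: "nat \<Rightarrow> real poly"
  assumes "\<And>t. (\<lambda>n. coeff (Q n) t) \<longlonglongrightarrow> coeff Q0 t"
  shows "(\<lambda>n. coeff (exp_trunc d (Q n)) t) \<longlonglongrightarrow> coeff (exp_trunc d Q0) t"
  unfolding exp_trunc_def coeff_sum coeff_smult
  by (intro tendsto_sum tendsto_mult tendsto_const coeff_power_tendsto assms)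

text \<open>Vanishing of the low moments of \<open>W\<close> kills all monomials of \<open>T\<^sub>n\<close> of degree below \<open>k\<close>;
  the higher ones carry an extra positive power of \<open>\<delta>\<close>.\<close>

lemma weighted_poly_sum_tendsto:
  fixes T :: "nat \<Rightarrow> real poly" and W \<delta> :: "nat \<Rightarrow> real"
  assumes \<delta>: "\<delta> \<longlonglongrightarrow> 0" "\<forall>n. \<delta> n \<noteq> 0"
    and T: "\<And>t. (\<lambda>n. coeff (T n) t) \<longlonglongrightarrow> coeff T0 t" "\<And>n. degree (T n) \<le> D"
    and moments: "\<And>u. u \<le> k \<Longrightarrow> (\<Sum>j\<le>d. W j * real j ^ u) = (if u = k then L else 0)"
  shows "(\<lambda>n. (\<Sum>j\<le>d. W j * poly (T n) (\<delta> n * real j)) / \<delta> n ^ k) \<longlonglongrightarrow> L * coeff T0 k"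
proof -
  define D' where "D' = max D k"
  define M where "M t = (\<Sum>j\<le>d. W j * real j ^ t)" for t
  define G where "G n t = (if t < k then 0 else \<delta> n ^ (t - k) * M t)" for n t
  have M_below: "M t = 0" if "t < k" for t
    using moments[of t] that by (simp add: M_def)
  have rewrite: "(\<Sum>j\<le>d. W j * poly (T n) (\<delta> n * real j)) / \<delta> n ^ k
      = (\<Sum>t\<le>D'. coeff (T n) t * G n t)" for n
  proof -
    have "(\<Sum>j\<le>d. W j * poly (T n) (\<delta> n * real j))
        = (\<Sum>j\<le>d. \<Sum>t\<le>D'. W j * (coeff (T n) t * (\<delta> n ^ t * real j ^ t)))"
    proof (intro sum.cong refl)
      fix j
      have "poly (T n) (\<delta> n * real j) = poly (\<Sum>t\<le>D'. monom (coeff (T n) t) t) (\<delta> n * real j)"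
        using T(2)[of n] by (simp add: D'_def poly_as_sum_of_monoms')
      then show "W j * poly (T n) (\<delta> n * real j)
          = (\<Sum>t\<le>D'. W j * (coeff (T n) t * (\<delta> n ^ t * real j ^ t)))"
        by (simp add: poly_sum poly_monom sum_distrib_left power_mult_distrib)
    qed
    also have "\<dots> = (\<Sum>t\<le>D'. coeff (T n) t * \<delta> n ^ t * M t)"
      by (subst sum.swap) (simp add: M_def sum_distrib_left mult_ac)
    also have "\<dots> = \<delta> n ^ k * (\<Sum>t\<le>D'. coeff (T n) t * G n t)"
      unfolding sum_distrib_left
      by (intro sum.cong refl) (auto simp: G_def M_below not_less power_add[symmetric])
    finally show ?thesis using \<delta>(2) by simp
  qed
  have G_lim: "(\<lambda>n. G n t) \<longlonglongrightarrow> (if t = k then L else 0)" for t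
  proof (cases "t < k")
    case False
    have "(\<lambda>n. \<delta> n ^ (t - k) * M t) \<longlonglongrightarrow> 0 ^ (t - k) * M t"
      by (intro tendsto_intros \<delta>(1))
    moreover have "0 ^ (t - k) * M t = (if t = k then L else 0)"
      using False moments[of k] by (auto simp: M_def)
    ultimately show ?thesis using False by (simp add: G_def)
  qed (simp add: G_def)
  have "(\<lambda>n. \<Sum>t\<le>D'. coeff (T n) t * G n t) \<longlonglongrightarrow> (\<Sum>t\<le>D'. coeff T0 t * (if t = k then L else 0))"
    by (intro tendsto_sum tendsto_mult T(1) G_lim)
  also have "(\<Sum>t\<le>D'. coeff T0 t * (if t = k then L else 0))
      = (\<Sum>t\<le>D'. if t = k then L * coeff T0 k else 0)"
    by (intro sum.cong) auto
  also have "\<dots> = L * coeff T0 k" by (simp add: D'_def)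
  finally show ?thesis unfolding rewrite .
qed

lemma poly_bigo_of_coeff_0_eq_0:
  fixes Q :: "nat \<Rightarrow> real poly" and \<delta> :: "nat \<Rightarrow> real"
  assumes "\<delta> \<longlonglongrightarrow> 0" and "\<And>t. (\<lambda>n. coeff (Q n) t) \<longlonglongrightarrow> coeff Q0 t"
    and "\<And>n. degree (Q n) \<le> D" and "\<And>n. coeff (Q n) 0 = 0"
  shows "(\<lambda>n. poly (Q n) (\<delta> n * c)) \<in> O(\<delta>)"
proof -
  have poly_eq: "poly (Q n) (\<delta> n * c) = (\<Sum>t\<in>{1..D}. coeff (Q n) t * c ^ t * \<delta> n ^ t)" for n
  proof -
    have "poly (Q n) (\<delta> n * c) = (\<Sum>t\<le>degree (Q n). coeff (Q n) t * (\<delta> n * c) ^ t)"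
      by (rule poly_altdef)
    also have "\<dots> = (\<Sum>t\<le>D. coeff (Q n) t * c ^ t * \<delta> n ^ t)"
      using assms(3)[of n]
      by (intro sum.mono_neutral_cong_left) (auto simp: coeff_eq_0 power_mult_distrib)
    also have "\<dots> = (\<Sum>t\<in>{1..D}. coeff (Q n) t * c ^ t * \<delta> n ^ t)"
      using assms(4)[of n] by (intro sum.mono_neutral_right) (auto simp: Suc_le_eq)
    finally show ?thesis .
  qed
  show ?thesis
    unfolding poly_eq
  proof (rule big_sum_in_bigo)
    fix t assume t: "t \<in> {1..D}"
    have "(\<lambda>n. coeff (Q n) t * c ^ t) \<in> O(\<lambda>_. 1)"
      by (rule bigoI_tendsto[where c = "coeff Q0 t * c ^ t"])
         (use assms(2) in \<open>auto intro!: tendsto_intros\<close>)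
    moreover have "(\<lambda>n. \<delta> n ^ t) \<in> O(\<lambda>n. \<delta> n ^ 1)"
      using t by (intro tendsto_zero_power_bigo[OF assms(1)]) auto
    ultimately have "(\<lambda>n. coeff (Q n) t * c ^ t * \<delta> n ^ t) \<in> O(\<lambda>n. 1 * \<delta> n ^ 1)"
      by (rule landau_o.big_mult)
    then show "(\<lambda>n. coeff (Q n) t * c ^ t * \<delta> n ^ t) \<in> O(\<delta>)" by simp
  qed
qed

lemma weighted_exp_sum_tendsto:
  fixes \<delta> \<delta>' W :: "nat \<Rightarrow> real" and Q :: "nat \<Rightarrow> real poly" and \<rho> :: "nat \<Rightarrow> nat \<Rightarrow> real"
  assumes \<delta>: "\<forall>n. \<delta> n > 0" "\<delta> \<longlonglongrightarrow> 0" "\<forall>n. \<delta>' n > 0" "(\<lambda>n. \<delta> n / \<delta>' n) \<longlonglongrightarrow> 1"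
    and Q: "\<And>t. (\<lambda>n. coeff (Q n) t) \<longlonglongrightarrow> coeff Q0 t" "\<And>n. degree (Q n) \<le> D"
      "\<And>j. j \<le> d \<Longrightarrow> (\<lambda>n. poly (Q n) (\<delta> n * real j)) \<in> O(\<delta>)"
    and \<rho>: "\<And>n j. \<rho> n j > 0"
      "\<And>j. j \<le> d \<Longrightarrow> (\<lambda>n. ln (\<rho> n j) - poly (Q n) (\<delta> n * real j)) \<in> o(\<lambda>n. \<delta> n ^ d)"
    and "i \<le> d"
    and moments: "\<And>u. u \<le> d - i \<Longrightarrow> (\<Sum>j\<le>d. W j * real j ^ u) = (if u = d - i then L else 0)"
  shows "(\<lambda>n. \<delta>' n ^ i / \<delta>' n ^ d * (\<Sum>j\<le>d. W j * \<rho> n j))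
           \<longlonglongrightarrow> L * coeff (exp_trunc d Q0) (d - i)"
proof -
  define k where "k = d - i"
  define T where "T n = exp_trunc d (Q n)" for n
  define E where "E n = (\<Sum>j\<le>d. W j * (\<rho> n j - poly (T n) (\<delta> n * real j)))" for n
  have d_eq: "d = k + i" using \<open>i \<le> d\<close> by (simp add: k_def)
  have \<delta>_ne: "\<forall>n. \<delta> n \<noteq> 0" using \<delta>(1) by (metis less_irrefl)
  have remainder: "(\<lambda>n. \<rho> n j - poly (T n) (\<delta> n * real j)) \<in> o(\<lambda>n. \<delta> n ^ d)" if "j \<le> d" for j
    using exp_taylor_smallo[OF \<delta>(2) Q(3)[OF that] \<rho>(2)[OF that]] \<rho>(1)
    by (simp add: T_def poly_exp_trunc)
  have "E \<in> o(\<lambda>n. \<delta> n ^ d)"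
    unfolding E_def
  proof (rule big_sum_in_smallo)
    fix j assume "j \<in> {..d}"
    then show "(\<lambda>n. W j * (\<rho> n j - poly (T n) (\<delta> n * real j))) \<in> o(\<lambda>n. \<delta> n ^ d)"
      using remainder by (cases "W j = 0") simp_all
  qed
  then have "E \<in> o(\<lambda>n. \<delta> n ^ k)"
    using tendsto_zero_power_bigo[OF \<delta>(2), of k d] d_eq by (auto intro: landau_o.small_big_trans)
  then have E_lim: "(\<lambda>n. E n / \<delta> n ^ k) \<longlonglongrightarrow> 0"
    by (rule smalloD_tendsto)
  have T_lim: "(\<lambda>n. (\<Sum>j\<le>d. W j * poly (T n) (\<delta> n * real j)) / \<delta> n ^ k)
      \<longlonglongrightarrow> L * coeff (exp_trunc d Q0) k"
  proof (rule weighted_poly_sum_tendsto[OF \<delta>(2) \<delta>_ne])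
    show "(\<lambda>n. coeff (T n) t) \<longlonglongrightarrow> coeff (exp_trunc d Q0) t" for t
      unfolding T_def by (rule coeff_exp_trunc_tendsto[OF Q(1)])
    show "degree (T n) \<le> D * d" for n
      unfolding T_def by (rule degree_exp_trunc_le[OF Q(2)])
  qed (use moments in \<open>simp add: k_def\<close>)
  have rewrite: "\<delta>' n ^ i / \<delta>' n ^ d * (\<Sum>j\<le>d. W j * \<rho> n j)
      = (\<delta> n / \<delta>' n) ^ k
        * ((\<Sum>j\<le>d. W j * poly (T n) (\<delta> n * real j)) / \<delta> n ^ k + E n / \<delta> n ^ k)" for n
  proof -
    have pos: "\<delta> n > 0" "\<delta>' n > 0" using \<delta>(1,3) by auto
    have "\<delta>' n ^ i / \<delta>' n ^ d = (\<delta> n / \<delta>' n) ^ k / \<delta> n ^ k"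
      using pos by (simp add: d_eq power_add power_divide field_simps)
    moreover have "(\<Sum>j\<le>d. W j * \<rho> n j) = (\<Sum>j\<le>d. W j * poly (T n) (\<delta> n * real j)) + E n"
      by (simp add: E_def sum.distrib[symmetric] algebra_simps)
    ultimately show ?thesis using pos by (simp add: field_simps)
  qed
  have "(\<lambda>n. (\<delta> n / \<delta>' n) ^ k
        * ((\<Sum>j\<le>d. W j * poly (T n) (\<delta> n * real j)) / \<delta> n ^ k + E n / \<delta> n ^ k))
      \<longlonglongrightarrow> 1 ^ k * (L * coeff (exp_trunc d Q0) k + 0)"
    by (intro tendsto_intros \<delta>(4) T_lim E_lim)
  then have "(\<lambda>n. (\<delta> n / \<delta>' n) ^ k
        * ((\<Sum>j\<le>d. W j * poly (T n) (\<delta> n * real j)) / \<delta> n ^ k + E n / \<delta> n ^ k))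
      \<longlonglongrightarrow> L * coeff (exp_trunc d Q0) k"
    by (simp only: power_one mult_1_left add_0_right)
  then show ?thesis unfolding rewrite k_def[symmetric] .
qed

lemma pcompose_monom: "pcompose (monom c j) q = smult c (q ^ j)"
  by (induction j) (simp_all add: monom_0 monom_Suc pcompose_pCons)

lemma coeff_linear_poly_power':
  "coeff ([:a, b:] ^ j) i = real (j choose i) * b ^ i * (a::real) ^ (j - i)"
proof (cases "i \<le> j")
  case False
  have "degree ([:a, b:] ^ j) \<le> degree [:a, b:] * j" by (rule degree_power_le)
  also have "\<dots> \<le> j" by simp
  finally show ?thesis using False by (simp add: coeff_eq_0)
qed (simp add: coeff_linear_poly_power)

lemma coeff_jensen_J_rescaled:
  assumes "\<alpha> n > 0" "\<delta> > 0"
  shows "coeff (smult (inverse (\<delta> ^ d) / \<alpha> n)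
      (pcompose (jensen_J \<alpha> d n) [: -1 / exp A, \<delta> / exp A :])) i
    = \<delta> ^ i / \<delta> ^ d * (\<Sum>j\<le>d. (real (d choose j) * real (j choose i) * (-1) ^ (j - i))
        * (\<alpha> (n + j) / \<alpha> n / exp A ^ j))"
proof -
  have "coeff (smult (inverse (\<delta> ^ d) / \<alpha> n)
      (pcompose (jensen_J \<alpha> d n) [: -1 / exp A, \<delta> / exp A :])) i
    = (\<Sum>j\<le>d. inverse (\<delta> ^ d) / \<alpha> n * (real (d choose j) * \<alpha> (n + j)
        * (real (j choose i) * (\<delta> / exp A) ^ i * (-1 / exp A) ^ (j - i))))"
    by (simp add: jensen_J_def pcompose_sum pcompose_monom coeff_sum coeff_linear_poly_power'
        sum_distrib_left)
  also have "\<dots> = (\<Sum>j\<le>d. \<delta> ^ i / \<delta> ^ d * ((real (d choose j) * real (j choose i) * (-1) ^ (j - i))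
        * (\<alpha> (n + j) / \<alpha> n / exp A ^ j)))"
  proof (intro sum.cong refl)
    fix j
    show "inverse (\<delta> ^ d) / \<alpha> n * (real (d choose j) * \<alpha> (n + j)
        * (real (j choose i) * (\<delta> / exp A) ^ i * (-1 / exp A) ^ (j - i)))
      = \<delta> ^ i / \<delta> ^ d * ((real (d choose j) * real (j choose i) * (-1) ^ (j - i))
        * (\<alpha> (n + j) / \<alpha> n / exp A ^ j))"
    proof (cases "i \<le> j")
      case True
      have "exp A ^ j = exp A ^ i * exp A ^ (j - i)" using True by (simp flip: power_add)
      then have rearranged: "real (j choose i) * (\<delta> / exp A) ^ i * (-1 / exp A) ^ (j - i)
          = real (j choose i) * (\<delta> ^ i * (-1) ^ (j - i) / exp A ^ j)"
        unfolding power_divide by simp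
      show ?thesis unfolding rearranged using assms by (simp add: field_simps)
    qed (simp add: not_le binomial_eq_0)
  qed
  finally show ?thesis by (simp add: sum_distrib_left)
qed

lemma coeff_jensen_K_rescaled:
  assumes "\<alpha> n > 0" "\<delta> > 0"
  shows "coeff (smult (inverse ((exp A * \<delta>) ^ d) / \<alpha> n)
      (pcompose (jensen_K \<alpha> d n) [: - exp A, exp A * \<delta> :])) i
    = \<delta> ^ i / \<delta> ^ d * (\<Sum>j\<le>d. (real (d choose j) * real ((d - j) choose i) * (-1) ^ (d - j - i))
        * (\<alpha> (n + j) / \<alpha> n / exp A ^ j))"
proof -
  have "coeff (smult (inverse ((exp A * \<delta>) ^ d) / \<alpha> n)
      (pcompose (jensen_K \<alpha> d n) [: - exp A, exp A * \<delta> :])) i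
    = (\<Sum>j\<le>d. inverse ((exp A * \<delta>) ^ d) / \<alpha> n * (real (d choose j) * \<alpha> (n + j)
        * (real ((d - j) choose i) * (exp A * \<delta>) ^ i * (- exp A) ^ (d - j - i))))"
    by (simp add: jensen_K_def pcompose_sum pcompose_monom coeff_sum coeff_linear_poly_power'
        sum_distrib_left)
  also have "\<dots> = (\<Sum>j\<le>d. \<delta> ^ i / \<delta> ^ d * ((real (d choose j) * real ((d - j) choose i)
        * (-1) ^ (d - j - i)) * (\<alpha> (n + j) / \<alpha> n / exp A ^ j)))"
  proof (intro sum.cong refl)
    fix j assume "j \<in> {..d}"
    show "inverse ((exp A * \<delta>) ^ d) / \<alpha> n * (real (d choose j) * \<alpha> (n + j)
        * (real ((d - j) choose i) * (exp A * \<delta>) ^ i * (- exp A) ^ (d - j - i)))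
      = \<delta> ^ i / \<delta> ^ d * ((real (d choose j) * real ((d - j) choose i) * (-1) ^ (d - j - i))
        * (\<alpha> (n + j) / \<alpha> n / exp A ^ j))"
    proof (cases "i \<le> d - j")
      case True
      have "exp A ^ d = exp A ^ i * exp A ^ (d - j - i) * exp A ^ j"
        using True \<open>j \<in> {..d}\<close> by (simp flip: power_add)
      then have rearranged: "inverse ((exp A * \<delta>) ^ d) * ((exp A * \<delta>) ^ i * (- exp A) ^ (d - j - i))
          = inverse (\<delta> ^ d) * (\<delta> ^ i * (-1) ^ (d - j - i) / exp A ^ j)"
        unfolding power_mult_distrib power_minus[of "exp A"] by (simp add: field_simps)
      have "inverse ((exp A * \<delta>) ^ d) / \<alpha> n * (real (d choose j) * \<alpha> (n + j)
          * (real ((d - j) choose i) * (exp A * \<delta>) ^ i * (- exp A) ^ (d - j - i)))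
        = (inverse ((exp A * \<delta>) ^ d) * ((exp A * \<delta>) ^ i * (- exp A) ^ (d - j - i)))
          * (real (d choose j) * \<alpha> (n + j) * real ((d - j) choose i)) / \<alpha> n"
        by (simp only: mult_ac divide_inverse)
      also have "\<dots> = \<delta> ^ i / \<delta> ^ d * ((real (d choose j) * real ((d - j) choose i)
          * (-1) ^ (d - j - i)) * (\<alpha> (n + j) / \<alpha> n / exp A ^ j))"
        unfolding rearranged using assms by (simp add: field_simps)
      finally show ?thesis .
    qed (simp add: not_le binomial_eq_0)
  qed
  finally show ?thesis by (simp add: sum_distrib_left)
qed

lemma coeff_exp_trunc_monom2:
  assumes "t \<le> d"
  shows "coeff (exp_trunc d (monom \<kappa> 2)) t = (if even t then \<kappa> ^ (t div 2) / fact (t div 2) else 0)"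
proof -
  have "coeff (exp_trunc d (monom \<kappa> 2)) t
      = (\<Sum>s\<le>d. if s = t div 2 \<and> even t then \<kappa> ^ s / fact s else 0)"
    by (auto simp: exp_trunc_def coeff_sum monom_power intro!: sum.cong)
  also have "\<dots> = (if even t then \<kappa> ^ (t div 2) / fact (t div 2) else 0)"
    using assms by (auto simp: sum.If_cases)
  finally show ?thesis .
qed

lemma coeff_hermite:
  "coeff (hermite d) i = (if i \<le> d \<and> even (d - i) then
      complex_of_real (fact d * (-1)^((d-i) div 2) * 2^i / (fact ((d-i) div 2) * fact i)) else 0)"
proof -
  define c where
    "c k = complex_of_real (fact d * (-1) ^ k * 2 ^ (d - 2 * k) / (fact k * fact (d - 2 * k)))" for k
  have "coeff (hermite d) i = (\<Sum>k\<le>d div 2. if d - 2 * k = i then c k else 0)"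
    unfolding hermite_def coeff_sum coeff_monom c_def by (rule refl)
  also have "\<dots> = (if i \<le> d \<and> even (d - i) then c ((d - i) div 2) else 0)"
  proof (cases "i \<le> d \<and> even (d - i)")
    case True
    have "(\<Sum>k\<le>d div 2. if d - 2 * k = i then c k else 0)
        = (\<Sum>k\<le>d div 2. if k = (d - i) div 2 then c k else 0)"
      using True by (intro sum.cong refl) (auto elim!: evenE)
    also have "\<dots> = c ((d - i) div 2)" using True by auto
    finally show ?thesis unfolding if_P[OF True] .
  next
    case False
    have "(\<Sum>k\<le>d div 2. if d - 2 * k = i then c k else 0) = 0"
    proof (intro sum.neutral ballI)
      fix k assume "k \<in> {..d div 2}"
      then have "2 * k \<le> d" by auto
      then show "(if d - 2 * k = i then c k else 0) = 0" using False by auto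
    qed
    then show ?thesis unfolding if_not_P[OF False] .
  qed
  also have "\<dots> = (if i \<le> d \<and> even (d - i) then
      complex_of_real (fact d * (-1)^((d-i) div 2) * 2^i / (fact ((d-i) div 2) * fact i)) else 0)"
  proof (cases "i \<le> d \<and> even (d - i)")
    case True
    then have "d - 2 * ((d - i) div 2) = i" by (auto elim!: evenE)
    then show ?thesis unfolding if_P[OF True] by (simp add: c_def)
  next
    case False
    then show ?thesis by (simp only: if_not_P[OF False] if_False)
  qed
  finally show ?thesis .
qed

lemma coeff_hermite_target:
  assumes "\<kappa> \<in> {1, -1}"
  shows "coeff (hermite_target \<kappa> d) i = (if i \<le> d \<and> even (d - i) then
      complex_of_real (fact d * \<kappa> ^ ((d-i) div 2) / (fact ((d-i) div 2) * fact i)) else 0)"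
proof -
  have linear: "[:0, c:] = monom c (Suc 0)" for c :: complex
    by (simp add: monom_Suc monom_0)
  show ?thesis
  proof (cases "i \<le> d \<and> even (d - i)")
    case False
    have "coeff (hermite d) i = 0" by (subst coeff_hermite) (simp only: if_not_P[OF False])
    then show ?thesis unfolding if_not_P[OF False] by (simp add: hermite_target_def linear)
  next
    case True
    define k where "k = (d - i) div 2"
    have d_eq: "d = i + 2 * k" using True by (auto simp: k_def elim!: evenE)
    have hermite_i: "coeff (hermite d) i = complex_of_real (fact d * (-1)^k * 2^i / (fact k * fact i))"
      by (subst coeff_hermite) (simp only: if_P[OF True] k_def)
    consider "\<kappa> = -1" | "\<kappa> = 1" using assms by auto
    then show ?thesis
    proof cases
      case 1
      have "coeff (hermite_target \<kappa> d) i
          = (1/2) ^ i * complex_of_real (fact d * (-1)^k * 2^i / (fact k * fact i))"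
        using 1 by (simp add: hermite_target_def linear hermite_i)
      also have "\<dots> = complex_of_real ((1/2) ^ i * (fact d * (-1)^k * 2^i / (fact k * fact i)))"
        by simp
      also have "(1/2) ^ i * (fact d * (-1)^k * 2^i / (fact k * fact i))
          = fact d * (-1)^k / (fact k * fact i :: real)"
        by (simp add: power_one_over field_simps)
      finally show ?thesis unfolding if_P[OF True] using 1 by (simp add: k_def)
    next
      case 2
      have i_powers: "inverse (\<i> ^ d) * \<i> ^ i = complex_of_real ((-1) ^ k)"
      proof -
        have "\<i> ^ d = \<i> ^ i * (-1) ^ k" unfolding d_eq power_add power_mult by simp
        then show ?thesis by (simp add: field_simps)
      qed
      have "coeff (hermite_target \<kappa> d) i
          = inverse (\<i> ^ d) * ((\<i> / 2) ^ i * complex_of_real (fact d * (-1)^k * 2^i / (fact k * fact i)))"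
        using 2 by (simp add: hermite_target_def linear hermite_i)
      also have "\<dots> = (inverse (\<i> ^ d) * \<i> ^ i)
          * complex_of_real (fact d * (-1)^k * 2^i / (fact k * fact i) / 2 ^ i)"
        by (simp add: power_divide field_simps)
      also have "\<dots> = complex_of_real ((-1) ^ k * (fact d * (-1)^k * 2^i / (fact k * fact i) / 2 ^ i))"
        unfolding i_powers by simp
      also have "(-1) ^ k * (fact d * (-1)^k * 2^i / (fact k * fact i) / 2 ^ i)
          = fact d / (fact k * fact i :: real)"
        by (simp add: field_simps flip: power_mult_distrib)
      finally show ?thesis unfolding if_P[OF True] using 2 by (simp add: k_def)
    qed
  qed
qed

lemma poly_conv_hermite_target:
  fixes P :: "nat \<Rightarrow> real poly"
  assumes "\<kappa> \<in> {1, -1}"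
    and "\<And>i. i \<le> d \<Longrightarrow>
      (\<lambda>n. coeff (P n) i) \<longlonglongrightarrow> fact d / fact i * coeff (exp_trunc d (monom \<kappa> 2)) (d - i)"
    and "\<And>n i. d < i \<Longrightarrow> coeff (P n) i = 0"
  shows "poly_conv (\<lambda>n. map_poly complex_of_real (P n)) (hermite_target \<kappa> d)"
proof -
  have "(\<lambda>n. coeff (P n) i) \<longlonglongrightarrow> (if i \<le> d \<and> even (d - i)
      then fact d * \<kappa> ^ ((d-i) div 2) / (fact ((d-i) div 2) * fact i) else 0)" for i
  proof (cases "i \<le> d")
    case True
    have "fact d / fact i * coeff (exp_trunc d (monom \<kappa> 2)) (d - i) = (if i \<le> d \<and> even (d - i)
        then fact d * \<kappa> ^ ((d-i) div 2) / (fact ((d-i) div 2) * fact i) else 0)"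
      using True by (auto simp: coeff_exp_trunc_monom2 field_simps)
    with assms(2)[OF True] show ?thesis by simp
  qed (use assms(3) in simp)
  note lim = this
  have target: "coeff (hermite_target \<kappa> d) i = complex_of_real (if i \<le> d \<and> even (d - i)
      then fact d * \<kappa> ^ ((d-i) div 2) / (fact ((d-i) div 2) * fact i) else 0)" for i
    by (subst coeff_hermite_target[OF assms(1)]) (simp only: if_distrib[of complex_of_real] of_real_0)
  show ?thesis
    unfolding poly_conv_def coeff_map_poly[of complex_of_real, OF of_real_0] target
    by (intro allI tendsto_of_real lim)
qed

lemma ratio_tendsto_one_of_diff_smallo:
  fixes \<delta> \<delta>' :: "'a \<Rightarrow> real"
  assumes "\<forall>x. \<delta> x \<noteq> 0" and "(\<lambda>x. \<delta>' x - \<delta> x) \<in> o[F](\<delta>)"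
  shows "((\<lambda>x. \<delta> x / \<delta>' x) \<longlongrightarrow> 1) F"
proof -
  have "((\<lambda>x. (\<delta>' x - \<delta> x) / \<delta> x) \<longlongrightarrow> 0) F"
    by (rule smalloD_tendsto[OF assms(2)])
  then have "((\<lambda>x. inverse (1 + (\<delta>' x - \<delta> x) / \<delta> x)) \<longlongrightarrow> inverse (1 + 0)) F"
    by (intro tendsto_intros) simp_all
  moreover have "inverse (1 + (\<delta>' x - \<delta> x) / \<delta> x) = \<delta> x / \<delta>' x" for x
    using assms(1) by (simp add: field_simps)
  ultimately show ?thesis by simp
qed

lemma log_polynomial_perturbed_expansion:
  fixes \<alpha> A A' \<delta> :: "nat \<Rightarrow> real"
  assumes "log_polynomial \<alpha> m A \<kappa> \<delta>" and A': "(\<lambda>n. A' n - A n) \<in> o(\<delta>)"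
  obtains Q :: "nat \<Rightarrow> real poly" where
    "\<And>t. (\<lambda>n. coeff (Q n) t) \<longlonglongrightarrow> coeff (monom \<kappa> 2) t"
    "\<And>n. degree (Q n) \<le> m"
    "\<And>j. (\<lambda>n. poly (Q n) (\<delta> n * real j)) \<in> O(\<delta>)"
    "\<And>j. j \<le> m + 1 \<Longrightarrow> (\<lambda>n. ln (\<alpha> (n + j) / \<alpha> n / exp (A' n) ^ j) - poly (Q n) (\<delta> n * real j))
       \<in> o(\<lambda>n. \<delta> n ^ (m + 1))"
proof -
  from assms(1) obtain g :: "nat \<Rightarrow> nat \<Rightarrow> real" where
    m: "m \<ge> 2" and \<alpha>: "\<forall>n. \<alpha> n > 0" and
    expansion: "\<forall>j\<in>{1..m+1}.
      (\<lambda>n. ln (\<alpha> (n + j) / \<alpha> n) - (A n * real j + \<kappa> * \<delta> n ^ 2 * real j ^ 2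
        + (\<Sum>k=3..m. g k n * real j ^ k))) \<in> o(\<lambda>n. \<delta> n ^ (m + 1))" and
    \<delta>: "\<forall>n. \<delta> n > 0" "\<delta> \<longlonglongrightarrow> 0" and
    g: "\<forall>k\<in>{3..m}. g k \<in> o(\<lambda>n. \<delta> n ^ k)"
    unfolding log_polynomial_def by blast
  define Q where "Q n = monom ((A n - A' n) / \<delta> n) 1 + monom \<kappa> 2
      + (\<Sum>k\<in>{3..m}. monom (g k n / \<delta> n ^ k) k)" for n
  have \<delta>_ne: "\<delta> n \<noteq> 0" for n using \<delta>(1) by (metis less_irrefl)
  have coeff_Q: "coeff (Q n) t = (if t = 1 then (A n - A' n) / \<delta> n else 0) + (if t = 2 then \<kappa> else 0)
      + (if t \<in> {3..m} then g t n / \<delta> n ^ t else 0)" for n t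
    unfolding Q_def coeff_add coeff_sum coeff_monom by (simp add: eq_commute[of _ t])
  have poly_Q: "poly (Q n) (\<delta> n * real j) = (A n - A' n) * real j + \<kappa> * \<delta> n ^ 2 * real j ^ 2
      + (\<Sum>k=3..m. g k n * real j ^ k)" for n j
  proof -
    have "(\<Sum>k=3..m. g k n / \<delta> n ^ k * (\<delta> n * real j) ^ k) = (\<Sum>k=3..m. g k n * real j ^ k)"
      using \<delta>_ne[of n] by (intro sum.cong refl) (simp add: power_mult_distrib)
    then show ?thesis using \<delta>_ne[of n]
      by (simp add: Q_def poly_sum poly_monom power_mult_distrib)
  qed
  have Q_lim: "(\<lambda>n. coeff (Q n) t) \<longlonglongrightarrow> coeff (monom \<kappa> 2) t" for t
  proof -
    have "(\<lambda>n. (A n - A' n) / \<delta> n) \<longlonglongrightarrow> 0"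
      using tendsto_minus[OF smalloD_tendsto[OF A']] by (simp add: minus_divide_left)
    then have linear: "(\<lambda>n. if t = 1 then (A n - A' n) / \<delta> n else 0) \<longlonglongrightarrow> 0"
      by (cases "t = 1") simp_all
    have higher: "(\<lambda>n. if t \<in> {3..m} then g t n / \<delta> n ^ t else 0) \<longlonglongrightarrow> 0"
    proof (cases "t \<in> {3..m}")
      case True
      then show ?thesis using smalloD_tendsto[OF g[rule_format, OF True]] by simp
    next
      case False
      show ?thesis unfolding if_not_P[OF False] by (rule tendsto_const)
    qed
    have "(\<lambda>n. coeff (Q n) t) \<longlonglongrightarrow> 0 + (if t = 2 then \<kappa> else 0) + 0"
      unfolding coeff_Q by (intro tendsto_add linear higher tendsto_const)
    then show ?thesis by simp
  qed
  have Q_degree: "degree (Q n) \<le> m" for n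
    unfolding Q_def using m
    by (intro degree_add_le degree_sum_le order.trans[OF degree_monom_le]) auto
  show ?thesis
  proof (rule that[OF Q_lim Q_degree])
    show "(\<lambda>n. poly (Q n) (\<delta> n * real j)) \<in> O(\<delta>)" for j
      by (rule poly_bigo_of_coeff_0_eq_0[OF \<delta>(2) Q_lim Q_degree]) (simp add: coeff_Q)
  next
    fix j assume j: "j \<le> m + 1"
    show "(\<lambda>n. ln (\<alpha> (n + j) / \<alpha> n / exp (A' n) ^ j) - poly (Q n) (\<delta> n * real j))
        \<in> o(\<lambda>n. \<delta> n ^ (m + 1))"
    proof (cases "j = 0")
      case True
      have "\<alpha> n \<noteq> 0" for n using \<alpha> by (metis less_irrefl)
      with True show ?thesis by (simp add: poly_0_coeff_0 coeff_Q)
    next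
      case False
      have ln_\<rho>: "ln (\<alpha> (n + j) / \<alpha> n / exp (A' n) ^ j) = ln (\<alpha> (n + j) / \<alpha> n) - real j * A' n" for n
        unfolding exp_of_nat_mult[symmetric] using \<alpha>
        by (intro ln_div_exp) (metis divide_pos_pos less_irrefl)
      have "ln (\<alpha> (n + j) / \<alpha> n / exp (A' n) ^ j) - poly (Q n) (\<delta> n * real j)
          = ln (\<alpha> (n + j) / \<alpha> n) - (A n * real j + \<kappa> * \<delta> n ^ 2 * real j ^ 2
            + (\<Sum>k=3..m. g k n * real j ^ k))" for n
        unfolding ln_\<rho> poly_Q by (simp add: algebra_simps)
      then show ?thesis using expansion j False by simp
    qed
  qed
qed

lemma hermite_jensen_of_log_expansion:
  fixes \<alpha> A' \<delta> \<delta>' :: "nat \<Rightarrow> real" and Q :: "nat \<Rightarrow> real poly"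
  assumes "\<kappa> \<in> {1, -1}" and "1 \<le> d" and \<alpha>: "\<forall>n. \<alpha> n > 0"
    and \<delta>: "\<forall>n. \<delta> n > 0" "\<delta> \<longlonglongrightarrow> 0" "\<forall>n. \<delta>' n > 0" "(\<lambda>n. \<delta> n / \<delta>' n) \<longlonglongrightarrow> 1"
    and Q: "\<And>t. (\<lambda>n. coeff (Q n) t) \<longlonglongrightarrow> coeff (monom \<kappa> 2) t" "\<And>n. degree (Q n) \<le> D"
      "\<And>j. (\<lambda>n. poly (Q n) (\<delta> n * real j)) \<in> O(\<delta>)"
    and log_expansion: "\<And>j. j \<le> d \<Longrightarrow>
      (\<lambda>n. ln (\<alpha> (n + j) / \<alpha> n / exp (A' n) ^ j) - poly (Q n) (\<delta> n * real j)) \<in> o(\<lambda>n. \<delta> n ^ d)"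
  shows "hermite_jensen \<alpha> d A' \<kappa> \<delta>'"
proof -
  define \<rho> where "\<rho> n j = \<alpha> (n + j) / \<alpha> n / exp (A' n) ^ j" for n j
  define H where "H = exp_trunc d (monom \<kappa> 2)"
  have lim: "(\<lambda>n. \<delta>' n ^ i / \<delta>' n ^ d * (\<Sum>j\<le>d. W j * \<rho> n j)) \<longlonglongrightarrow> L * coeff H (d - i)"
    if "i \<le> d" "\<And>u. u \<le> d - i \<Longrightarrow> (\<Sum>j\<le>d. W j * real j ^ u) = (if u = d - i then L else 0)"
    for i W L
    unfolding H_def
    by (rule weighted_exp_sum_tendsto[OF \<delta> Q])
       (use \<alpha> log_expansion that in \<open>simp_all add: \<rho>_def\<close>)
  have "poly_conv (\<lambda>n. map_poly complex_of_real (smult (inverse (\<delta>' n ^ d) / \<alpha> n)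
      (pcompose (jensen_J \<alpha> d n) [: -1 / exp (A' n), \<delta>' n / exp (A' n) :]))) (hermite_target \<kappa> d)"
  proof (rule poly_conv_hermite_target[OF assms(1)], fold H_def)
    fix i assume i: "i \<le> d"
    have coeff_eq: "(\<lambda>n. coeff (smult (inverse (\<delta>' n ^ d) / \<alpha> n)
        (pcompose (jensen_J \<alpha> d n) [: -1 / exp (A' n), \<delta>' n / exp (A' n) :])) i)
      = (\<lambda>n. \<delta>' n ^ i / \<delta>' n ^ d * (\<Sum>j\<le>d. (real (d choose j) * real (j choose i) * (-1) ^ (j - i))
          * \<rho> n j))"
      unfolding \<rho>_def using \<alpha> \<delta>(3) by (intro ext coeff_jensen_J_rescaled) auto
    have sign: "(-1) ^ (d - i) * fact d / fact i * coeff H (d - i) = fact d / fact i * coeff H (d - i)"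
      using i by (cases "even (d - i)") (simp_all add: H_def coeff_exp_trunc_monom2)
    from lim[OF i jensen_J_weight_moments[OF i]]
    show "(\<lambda>n. coeff (smult (inverse (\<delta>' n ^ d) / \<alpha> n)
        (pcompose (jensen_J \<alpha> d n) [: -1 / exp (A' n), \<delta>' n / exp (A' n) :])) i)
      \<longlonglongrightarrow> fact d / fact i * coeff H (d - i)"
      unfolding coeff_eq sign .
  next
    fix n i assume "d < i"
    then show "coeff (smult (inverse (\<delta>' n ^ d) / \<alpha> n)
        (pcompose (jensen_J \<alpha> d n) [: -1 / exp (A' n), \<delta>' n / exp (A' n) :])) i = 0"
      using \<alpha> \<delta>(3) by (subst coeff_jensen_J_rescaled) (auto intro!: sum.neutral simp: binomial_eq_0)
  qed
  moreover have "poly_conv (\<lambda>n. map_poly complex_of_real (smult (inverse ((exp (A' n) * \<delta>' n) ^ d) / \<alpha> n)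
      (pcompose (jensen_K \<alpha> d n) [: - exp (A' n), exp (A' n) * \<delta>' n :]))) (hermite_target \<kappa> d)"
  proof (rule poly_conv_hermite_target[OF assms(1)], fold H_def)
    fix i assume i: "i \<le> d"
    have coeff_eq: "(\<lambda>n. coeff (smult (inverse ((exp (A' n) * \<delta>' n) ^ d) / \<alpha> n)
        (pcompose (jensen_K \<alpha> d n) [: - exp (A' n), exp (A' n) * \<delta>' n :])) i)
      = (\<lambda>n. \<delta>' n ^ i / \<delta>' n ^ d * (\<Sum>j\<le>d. (real (d choose j) * real ((d - j) choose i)
          * (-1) ^ (d - j - i)) * \<rho> n j))"
      unfolding \<rho>_def using \<alpha> \<delta>(3) by (intro ext coeff_jensen_K_rescaled) auto
    from lim[OF i jensen_K_weight_moments[OF i]]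
    show "(\<lambda>n. coeff (smult (inverse ((exp (A' n) * \<delta>' n) ^ d) / \<alpha> n)
        (pcompose (jensen_K \<alpha> d n) [: - exp (A' n), exp (A' n) * \<delta>' n :])) i)
      \<longlonglongrightarrow> fact d / fact i * coeff H (d - i)"
      unfolding coeff_eq .
  next
    fix n i assume "d < i"
    then show "coeff (smult (inverse ((exp (A' n) * \<delta>' n) ^ d) / \<alpha> n)
        (pcompose (jensen_K \<alpha> d n) [: - exp (A' n), exp (A' n) * \<delta>' n :])) i = 0"
      using \<alpha> \<delta>(3) by (subst coeff_jensen_K_rescaled) (auto intro!: sum.neutral simp: binomial_eq_0)
  qed
  ultimately show ?thesis
    unfolding hermite_jensen_def using assms(1,2) \<alpha> by blast
qed

theorem theorem2p1:
  fixes \<alpha> A A' \<delta> \<delta>' :: "nat \<Rightarrow> real" and m :: nat and \<kappa> :: real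
  assumes "log_polynomial \<alpha> m A \<kappa> \<delta>"
    and "\<forall>n. \<delta>' n > 0"
    and "(\<lambda>n. A' n - A n) \<in> o[sequentially](\<delta>)"
    and "(\<lambda>n. \<delta>' n - \<delta> n) \<in> o[sequentially](\<delta>)"
  shows "\<forall>d. 1 \<le> d \<and> d \<le> m + 1 \<longrightarrow> hermite_jensen \<alpha> d A' \<kappa> \<delta>'"
proof (intro allI impI)
  fix d assume d: "1 \<le> d \<and> d \<le> m + 1"
  from assms(1) have \<kappa>: "\<kappa> \<in> {1, -1}" and \<alpha>: "\<forall>n. \<alpha> n > 0"
    and \<delta>: "\<forall>n. \<delta> n > 0" "\<delta> \<longlonglongrightarrow> 0"
    unfolding log_polynomial_def by auto
  obtain Q where Q: "\<And>t. (\<lambda>n. coeff (Q n) t) \<longlonglongrightarrow> coeff (monom \<kappa> 2) t"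
      "\<And>n. degree (Q n) \<le> m" "\<And>j. (\<lambda>n. poly (Q n) (\<delta> n * real j)) \<in> O(\<delta>)"
    and log_expansion: "\<And>j. j \<le> m + 1 \<Longrightarrow>
      (\<lambda>n. ln (\<alpha> (n + j) / \<alpha> n / exp (A' n) ^ j) - poly (Q n) (\<delta> n * real j))
        \<in> o(\<lambda>n. \<delta> n ^ (m + 1))"
    using log_polynomial_perturbed_expansion[OF assms(1,3)] by blast
  have ratio: "(\<lambda>n. \<delta> n / \<delta>' n) \<longlonglongrightarrow> 1"
    using \<delta>(1) assms(4) by (intro ratio_tendsto_one_of_diff_smallo) (auto simp: less_imp_neq[symmetric])
  show "hermite_jensen \<alpha> d A' \<kappa> \<delta>'"
  proof (rule hermite_jensen_of_log_expansion[OF \<kappa> _ \<alpha> \<delta> assms(2) ratio Q])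
    show "(\<lambda>n. ln (\<alpha> (n + j) / \<alpha> n / exp (A' n) ^ j) - poly (Q n) (\<delta> n * real j))
        \<in> o(\<lambda>n. \<delta> n ^ d)" if "j \<le> d" for j
      using log_expansion[of j] tendsto_zero_power_bigo[OF \<delta>(2), of d "m + 1"] that d
      by (auto intro: landau_o.small_big_trans)
  qed (use d in simp)
qed

end
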